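(* Let $K\subseteq L$ be convex bodies in $\mathbb{R}^d$ with the origin in the interior of $K$, and let $F$ be a non-trivial linear subspace of $\mathbb{R}^d$. Assume there are contact pairs $(v_1,p_1),\dots,(v_m,p_m)$ of $K$ and $L$ and positive weights $\alpha_1,\dots,\alpha_m$ such that \[ P_F\Big(\sum_{i}\alpha_i p_i\otimes v_i\Big)P_F=P_F,\quad \sum_i\alpha_ip_i=0,\quad \operatorname{tr}\Big(\sum_i\alpha_ip_i\otimes v_i\Big)=\sum_i\alpha_i=d,\quad \sum_i\alpha_iP_Fv_i=0. \] Let $K_{\mathrm{in}}=\operatorname{conv}\{v_1,\dots,v_m\}$ and $L_{\mathrm{out}}=\bigcap_{i=1}^m\{x\in\mathbb{R}^d:\langle p_i,x\rangle\le1\}$. Then \[ L_{\mathrm{out}}\cap F\subset -d\cdot P_FK_{\mathrm{in}}. \]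
   Context: A convex body is a compact convex set with nonempty interior. $P_F$ is orthogonal projection onto $F$. The polar of $S$ is $S^\circ=\{p:\langle x,p\rangle\le1\ \forall x\in S\}$. For convex bodies $K\subseteq L$, a contact pair of $K$ and $L$ is a pair $(v,p)$ with $v\in\partial K\cap\partial L$, $p\in\partial K^\circ\cap\partial L^\circ$, $\langle p,v\rangle=1$. For vectors $p,v$, $p\otimes v$ is the operator $x\mapsto\langle v,x\rangle p$. *)

theory Defs
  imports "HOL-Analysis.Analysis"
begin

definition convex_body :: "'a::euclidean_space set \<Rightarrow> bool" where
  "convex_body S \<longleftrightarrow> compact S \<and> convex S \<and> interior S \<noteq> {}"

definition polar :: "'a::euclidean_space set \<Rightarrow> 'a set" where
  "polar S = {p. \<forall>x\<in>S. x \<bullet> p \<le> 1}"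

definition contact_pair :: "'a::euclidean_space set \<Rightarrow> 'a set \<Rightarrow> 'a \<Rightarrow> 'a \<Rightarrow> bool" where
  "contact_pair K L v p \<longleftrightarrow>
     v \<in> frontier K \<inter> frontier L \<and> p \<in> frontier (polar K) \<inter> frontier (polar L) \<and> p \<bullet> v = 1"

definition orth_proj :: "'a::euclidean_space set \<Rightarrow> 'a \<Rightarrow> 'a" where
  "orth_proj F x = (THE y. y \<in> F \<and> (\<forall>z\<in>F. (x - y) \<bullet> z = 0))"

definition tensor :: "'a::euclidean_space \<Rightarrow> 'a \<Rightarrow> 'a \<Rightarrow> 'a" where
  "tensor p v = (\<lambda>x. (v \<bullet> x) *\<^sub>R p)"

definition trace_op :: "('a::euclidean_space \<Rightarrow> 'a) \<Rightarrow> real" where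
  "trace_op A = (\<Sum>b\<in>Basis. A b \<bullet> b)"

end

theory Submission
  imports Defs
begin

text \<open>
  Write \<open>A = \<Sum>\<^sub>i \<alpha>\<^sub>i p\<^sub>i \<otimes> v\<^sub>i\<close>, \<open>P = P\<^sub>F\<close>, \<open>d\<close> for the dimension, and let \<open>x \<in> L\<^sub>o\<^sub>u\<^sub>t \<inter> F\<close>.
  The weights \<open>\<lambda>\<^sub>i = \<alpha>\<^sub>i (1 - \<langle>p\<^sub>i, x\<rangle>) / d\<close> are nonnegative because \<open>x \<in> L\<^sub>o\<^sub>u\<^sub>t\<close>, and they sum
  to \<open>1\<close> because \<open>\<Sum> \<alpha>\<^sub>i = d\<close> and \<open>\<Sum> \<alpha>\<^sub>i p\<^sub>i = 0\<close>; so \<open>y = \<Sum> \<lambda>\<^sub>i v\<^sub>i \<in> K\<^sub>i\<^sub>n\<close>.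
  Taking adjoints in \<open>P A P = P\<close> gives \<open>P A\<^sup>* x = x\<close>, i.e. \<open>\<Sum> \<alpha>\<^sub>i \<langle>p\<^sub>i, x\<rangle> P v\<^sub>i = x\<close>,
  and together with \<open>\<Sum> \<alpha>\<^sub>i P v\<^sub>i = 0\<close> this yields \<open>P y = - x / d\<close>.
\<close>

lemma orth_proj_eqI:
  fixes F :: "'a::euclidean_space set"
  assumes "subspace F" and "w \<in> F" and "\<And>z. z \<in> F \<Longrightarrow> (x - w) \<bullet> z = 0"
  shows "orth_proj F x = w"
  unfolding orth_proj_def
proof (rule the_equality)
  show "w \<in> F \<and> (\<forall>z\<in>F. (x - w) \<bullet> z = 0)" using assms by blast
next
  fix u assume u: "u \<in> F \<and> (\<forall>z\<in>F. (x - u) \<bullet> z = 0)"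
  have "w - u \<in> F" using u assms by (simp add: subspace_diff)
  then have "(x - u) \<bullet> (w - u) = 0" and "(x - w) \<bullet> (w - u) = 0" using u assms by auto
  then have "(w - u) \<bullet> (w - u) = 0" by (simp add: inner_diff_left inner_diff_right)
  then show "u = w" by simp
qed

lemma orth_proj_characterization:
  fixes F :: "'a::euclidean_space set"
  assumes "subspace F"
  shows "orth_proj F x \<in> F \<and> (\<forall>z\<in>F. (x - orth_proj F x) \<bullet> z = 0)"
proof -
  obtain y z where "y \<in> span F" and "\<And>w. w \<in> span F \<Longrightarrow> orthogonal z w" and "x = y + z"
    using orthogonal_subspace_decomp_exists by blast
  moreover have "span F = F" using assms by simp
  ultimately have "y \<in> F" and "\<And>w. w \<in> F \<Longrightarrow> (x - y) \<bullet> w = 0"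
    by (auto simp: orthogonal_def)
  then show ?thesis using orth_proj_eqI[OF assms] by simp
qed

lemma orth_proj_in_subspace:
  "subspace F \<Longrightarrow> orth_proj F x \<in> F"
  using orth_proj_characterization by blast

lemma orth_proj_orthogonal:
  "subspace F \<Longrightarrow> z \<in> F \<Longrightarrow> (x - orth_proj F x) \<bullet> z = 0"
  using orth_proj_characterization by blast

lemma orth_proj_id:
  "subspace F \<Longrightarrow> x \<in> F \<Longrightarrow> orth_proj F x = x"
  by (rule orth_proj_eqI) auto

lemma linear_orth_proj:
  fixes F :: "'a::euclidean_space set"
  assumes F: "subspace F"
  shows "linear (orth_proj F)"
proof (rule linearI)
  fix x y :: 'a
  show "orth_proj F (x + y) = orth_proj F x + orth_proj F y"
  proof (rule orth_proj_eqI[OF F])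
    show "orth_proj F x + orth_proj F y \<in> F"
      using F by (simp add: orth_proj_in_subspace subspace_add)
    fix z assume "z \<in> F"
    then show "(x + y - (orth_proj F x + orth_proj F y)) \<bullet> z = 0"
      using orth_proj_orthogonal[OF F, of z x] orth_proj_orthogonal[OF F, of z y]
      by (simp add: algebra_simps)
  qed
next
  fix c :: real and x :: 'a
  show "orth_proj F (c *\<^sub>R x) = c *\<^sub>R orth_proj F x"
  proof (rule orth_proj_eqI[OF F])
    show "c *\<^sub>R orth_proj F x \<in> F" using F by (simp add: orth_proj_in_subspace subspace_scale)
    fix z assume "z \<in> F"
    then show "(c *\<^sub>R x - c *\<^sub>R orth_proj F x) \<bullet> z = 0"
      using orth_proj_orthogonal[OF F, of z x] by (simp flip: scaleR_diff_right)
  qed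
qed

lemma orth_proj_self_adjoint:
  fixes F :: "'a::euclidean_space set"
  assumes F: "subspace F"
  shows "u \<bullet> orth_proj F y = orth_proj F u \<bullet> y"
proof -
  have "u \<bullet> orth_proj F y = orth_proj F u \<bullet> orth_proj F y"
    using orth_proj_orthogonal[OF F orth_proj_in_subspace[OF F], where x = u and x1 = y]
    by (metis inner_diff_left eq_iff_diff_eq_0)
  moreover have "y \<bullet> orth_proj F u = orth_proj F y \<bullet> orth_proj F u"
    using orth_proj_orthogonal[OF F orth_proj_in_subspace[OF F], where x = y and x1 = u]
    by (metis inner_diff_left eq_iff_diff_eq_0)
  ultimately show ?thesis by (metis inner_commute)
qed

lemma inner_orth_proj_subspace:
  "subspace F \<Longrightarrow> z \<in> F \<Longrightarrow> z \<bullet> orth_proj F u = z \<bullet> u"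
  by (simp add: orth_proj_self_adjoint orth_proj_id)

lemma orth_proj_adjoint_fixes_subspace:
  fixes F :: "'a::euclidean_space set" and A B :: "'a \<Rightarrow> 'a"
  assumes F: "subspace F"
    and adjoint: "\<And>x y. A y \<bullet> x = y \<bullet> B x"
    and PAP: "\<And>y. orth_proj F (A (orth_proj F y)) = orth_proj F y"
    and "x \<in> F"
  shows "orth_proj F (B x) = x"
proof -
  have "orth_proj F (B x) \<bullet> y = x \<bullet> y" for y
  proof -
    have "orth_proj F (B x) \<bullet> y = B x \<bullet> orth_proj F y"
      by (rule orth_proj_self_adjoint[OF F, symmetric])
    also have "\<dots> = A (orth_proj F y) \<bullet> x"
      by (metis adjoint inner_commute)
    also have "\<dots> = x \<bullet> orth_proj F (A (orth_proj F y))"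
      unfolding inner_orth_proj_subspace[OF F \<open>x \<in> F\<close>] by (rule inner_commute)
    also have "\<dots> = x \<bullet> y"
      by (simp add: PAP inner_orth_proj_subspace[OF F \<open>x \<in> F\<close>])
    finally show ?thesis .
  qed
  from this[of "orth_proj F (B x) - x"] show ?thesis
    by (metis inner_diff_left inner_eq_zero_iff eq_iff_diff_eq_0)
qed

lemma inner_sum_tensor:
  "(\<Sum>i<m. \<alpha> i *\<^sub>R tensor (p i) (v i) y) \<bullet> x = y \<bullet> (\<Sum>i<m. (\<alpha> i * (p i \<bullet> x)) *\<^sub>R v i)"
  by (simp add: tensor_def inner_sum_left inner_sum_right inner_commute mult_ac)

lemma scaled_projection_in_hull:
  fixes F :: "'a::euclidean_space set" and m :: nat and v p :: "nat \<Rightarrow> 'a" and d :: real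
  assumes F: "subspace F" and "x \<in> F" and "d > 0"
    and below: "\<And>i. i < m \<Longrightarrow> p i \<bullet> x \<le> 1"
    and nonneg: "\<And>i. i < m \<Longrightarrow> \<alpha> i \<ge> 0"
    and "(\<Sum>i<m. \<alpha> i *\<^sub>R p i) = 0"
    and "(\<Sum>i<m. \<alpha> i) = d"
    and "(\<Sum>i<m. \<alpha> i *\<^sub>R orth_proj F (v i)) = 0"
    and reproduce: "orth_proj F (\<Sum>i<m. (\<alpha> i * (p i \<bullet> x)) *\<^sub>R v i) = x"
  shows "x \<in> (\<lambda>y. - d *\<^sub>R y) ` orth_proj F ` (convex hull (v ` {..<m}))"
proof -
  define w where "w i = \<alpha> i * (1 - p i \<bullet> x) / d" for i
  have "(\<Sum>i<m. \<alpha> i * (p i \<bullet> x)) = (\<Sum>i<m. \<alpha> i *\<^sub>R p i) \<bullet> x"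
    by (simp add: inner_sum_left)
  then have "(\<Sum>i<m. \<alpha> i * (p i \<bullet> x)) = 0"
    using \<open>(\<Sum>i<m. \<alpha> i *\<^sub>R p i) = 0\<close> by simp
  then have "sum w {..<m} = 1"
    using \<open>(\<Sum>i<m. \<alpha> i) = d\<close> \<open>d > 0\<close>
    by (simp add: w_def right_diff_distrib sum_subtractf flip: sum_divide_distrib)
  moreover have "w i \<ge> 0" if "i \<in> {..<m}" for i
    using that below nonneg \<open>d > 0\<close> by (simp add: w_def)
  ultimately have hull: "(\<Sum>i<m. w i *\<^sub>R v i) \<in> convex hull (v ` {..<m})"
    by (intro convex_sum) (auto intro: hull_inc)
  have "(\<Sum>i<m. w i *\<^sub>R v i)
      = (1 / d) *\<^sub>R ((\<Sum>i<m. \<alpha> i *\<^sub>R v i) - (\<Sum>i<m. (\<alpha> i * (p i \<bullet> x)) *\<^sub>R v i))"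
    unfolding scaleR_sum_right sum_subtractf[symmetric]
    by (rule sum.cong) (simp_all add: w_def algebra_simps diff_divide_distrib)
  then have "orth_proj F (\<Sum>i<m. w i *\<^sub>R v i)
      = (1 / d) *\<^sub>R ((\<Sum>i<m. \<alpha> i *\<^sub>R orth_proj F (v i))
                     - orth_proj F (\<Sum>i<m. (\<alpha> i * (p i \<bullet> x)) *\<^sub>R v i))"
    using linear_orth_proj[OF F] by (simp add: linear_diff linear_scale linear_sum)
  also have "\<dots> = - (1 / d) *\<^sub>R x"
    using \<open>(\<Sum>i<m. \<alpha> i *\<^sub>R orth_proj F (v i)) = 0\<close> reproduce by simp
  finally have "x = - d *\<^sub>R orth_proj F (\<Sum>i<m. w i *\<^sub>R v i)"
    using \<open>d > 0\<close> by simp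
  with hull show ?thesis by blast
qed

theorem mainTheorem10:
  fixes K L F :: "'a::euclidean_space set"
    and m :: nat and v p :: "nat \<Rightarrow> 'a" and \<alpha> :: "nat \<Rightarrow> real"
  assumes "convex_body K" and "convex_body L" and "K \<subseteq> L" and "0 \<in> interior K"
    and "subspace F" and "F \<noteq> {0}"
    and "\<And>i. i < m \<Longrightarrow> contact_pair K L (v i) (p i)"
    and "\<And>i. i < m \<Longrightarrow> \<alpha> i > 0"
    and "\<And>x. orth_proj F ((\<lambda>y. \<Sum>i<m. \<alpha> i *\<^sub>R tensor (p i) (v i) y) (orth_proj F x))
               = orth_proj F x"
    and "(\<Sum>i<m. \<alpha> i *\<^sub>R p i) = 0"
    and "trace_op (\<lambda>y. \<Sum>i<m. \<alpha> i *\<^sub>R tensor (p i) (v i) y) = real DIM('a)"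
    and "(\<Sum>i<m. \<alpha> i) = real DIM('a)"
    and "(\<Sum>i<m. \<alpha> i *\<^sub>R orth_proj F (v i)) = 0"
  shows "(\<Inter>i<m. {x. p i \<bullet> x \<le> 1}) \<inter> F
           \<subseteq> (\<lambda>x. - real DIM('a) *\<^sub>R x) ` (orth_proj F ` (convex hull (v ` {..<m})))"
proof
  fix x assume x: "x \<in> (\<Inter>i<m. {x. p i \<bullet> x \<le> 1}) \<inter> F"
  have "orth_proj F (\<Sum>i<m. (\<alpha> i * (p i \<bullet> x)) *\<^sub>R v i) = x"
    using x by (intro orth_proj_adjoint_fixes_subspace[OF assms(5) inner_sum_tensor assms(9)]) simp
  then show "x \<in> (\<lambda>x. - real DIM('a) *\<^sub>R x) ` orth_proj F ` (convex hull (v ` {..<m}))"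
    using x assms(5,8,10,12,13) by (intro scaled_projection_in_hull) (auto simp: less_imp_le)
qed

end
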